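(* Let $\mathcal T$ be an admissible labeled tree. Then $\Delta(\mathcal T)=0$ if and only if the root's label appears on no other vertex, and every other label appears on exactly two vertices $v,v'$, which lie at the same distance from the root and whose parents carry the same label. In that case the edges $(p(v),v)$ and $(p(v'),v')$ are paired row by row, giving a perfect pairing of the edges between each pair of consecutive levels.
   Context: Setting: $T$ is a finite rooted tree with levels (root at level $t$, children of a level-$s$ vertex at level $s-1$); $p(v)$ denotes the parent of $v$. A labeling gives each vertex $v$ a label $\ell(v)\in[N]$. The labeled tree $\mathcal T$ is admissible if (i) whenever $u$ is the parent of $v$ and $v$ the parent of $w$, $\ell(u)\ne\ell(w)$; (ii) for every edge $\{u,v\}$ there is another edge $\{u',v'\}$ with $\{\ell(u'),\ell(v')\}=\{\ell(u),\ell(v)\}$. $|V(\mathcal T)|$ is the number of distinct labels used (including the root's), $|E(\mathcal T)|$ the number of edges, and $\Delta(\mathcal T)=\tfrac12|E(\mathcal T)|-|V(\mathcal T)|+1$. *)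

theory Defs
  imports Complex_Main
begin

text \<open>A finite rooted tree: vertex set V, root r, parent map p (only meaningful off the root). The edges are the pairs
  (p v, v) for v in V - {r}; an edge is identified with its child endpoint.\<close>

definition rooted_tree :: "'v set \<Rightarrow> 'v \<Rightarrow> ('v \<Rightarrow> 'v) \<Rightarrow> bool" where
  "rooted_tree V r p \<longleftrightarrow> finite V \<and> r \<in> V \<and> (\<forall>v\<in>V - {r}. p v \<in> V)
     \<and> (\<forall>v\<in>V. \<exists>n. (p ^^ n) v = r)"

definition depth :: "('v \<Rightarrow> 'v) \<Rightarrow> 'v \<Rightarrow> 'v \<Rightarrow> nat" where
  "depth p r v = (LEAST n. (p ^^ n) v = r)"

definition admissible :: "'v set \<Rightarrow> 'v \<Rightarrow> ('v \<Rightarrow> 'v) \<Rightarrow> ('v \<Rightarrow> nat) \<Rightarrow> bool" where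
  "admissible V r p lab \<longleftrightarrow>
     (\<forall>w\<in>V. w \<noteq> r \<and> p w \<noteq> r \<longrightarrow> lab (p (p w)) \<noteq> lab w)
   \<and> (\<forall>v\<in>V - {r}. \<exists>w\<in>V - {r}. w \<noteq> v \<and> {lab (p w), lab w} = {lab (p v), lab v})"

text \<open>|V(T)|: number of distinct labels; |E(T)|: number of edges.\<close>
definition num_labels :: "'v set \<Rightarrow> ('v \<Rightarrow> nat) \<Rightarrow> nat" where
  "num_labels V lab = card (lab ` V)"

definition num_edges :: "'v set \<Rightarrow> 'v \<Rightarrow> nat" where
  "num_edges V r = card (V - {r})"

definition Delta :: "'v set \<Rightarrow> 'v \<Rightarrow> ('v \<Rightarrow> nat) \<Rightarrow> real" where
  "Delta V r lab = real (num_edges V r) / 2 - real (num_labels V lab) + 1"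

end

theory Submission imports Defs begin

text \<open>For every label x other than the root's, pick a vertex u of minimal depth carrying x.
  The label pair of its edge is {lab (p u), x}, and lab (p u) first appears strictly closer to
  the root than x, so x \<mapsto> {lab (p u), x} is injective. By admissibility every label pair of an
  edge occurs on at least two edges; hence |E| \<ge> 2 #pairs \<ge> 2 (|V(T)| - 1), i.e. Delta \<ge> 0.
  If Delta = 0 both inequalities are equalities: every edge carries the first pair of some label
  and every pair lies on exactly two edges. Induction on the depth, using that labels at distance
  two differ, shows that each edge (p v, v) is then the first edge of lab v read the right way
  round, so the vertices labelled x are exactly the lower ends of the two edges carrying the
  first pair of x.\<close>

lemma card_eq_sum_card_fibres:
  assumes "finite A"
  shows "card A = (\<Sum>c\<in>g ` A. card {a\<in>A. g a = c})"
  using sum.image_gen[OF assms, of "\<lambda>_. 1 :: nat" g] by simp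

lemma card_fibres_ge_2:
  assumes "finite A" and fibres: "\<And>c. c \<in> g ` A \<Longrightarrow> 2 \<le> card {a\<in>A. g a = c}"
  shows "2 * card (g ` A) \<le> card A"
    and "card A = 2 * card (g ` A) \<Longrightarrow> c \<in> g ` A \<Longrightarrow> card {a\<in>A. g a = c} = 2"
proof -
  have sum: "card A = (\<Sum>c\<in>g ` A. card {a\<in>A. g a = c})"
    using assms(1) by (rule card_eq_sum_card_fibres)
  have "(\<Sum>c\<in>g ` A. 2) \<le> (\<Sum>c\<in>g ` A. card {a\<in>A. g a = c})"
    by (rule sum_mono) (rule fibres)
  with sum show "2 * card (g ` A) \<le> card A" by simp
  assume tight: "card A = 2 * card (g ` A)" and c: "c \<in> g ` A"
  show "card {a\<in>A. g a = c} = 2"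
  proof (rule ccontr)
    assume "card {a\<in>A. g a = c} \<noteq> 2"
    with fibres c have "2 < card {a\<in>A. g a = c}"
      by (simp add: order_less_le)
    with fibres c \<open>finite A\<close>
    have "(\<Sum>c\<in>g ` A. 2) < (\<Sum>c\<in>g ` A. card {a\<in>A. g a = c})"
      by (intro sum_strict_mono_ex1) auto
    with sum tight show False by simp
  qed
qed

lemma involution_of_fibres_card_2:
  assumes fibres: "\<And>a. a \<in> A \<Longrightarrow> card {b\<in>A. g b = g a} = 2"
  obtains \<sigma> where "\<And>a. a \<in> A \<Longrightarrow> \<sigma> a \<in> A \<and> \<sigma> a \<noteq> a \<and> \<sigma> (\<sigma> a) = a \<and> g (\<sigma> a) = g a"
proof -
  define \<sigma> where "\<sigma> a = (SOME b. b \<in> A \<and> g b = g a \<and> b \<noteq> a)" for a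
  have other: "\<sigma> a \<in> A \<and> g (\<sigma> a) = g a \<and> \<sigma> a \<noteq> a" if a: "a \<in> A" for a
  proof -
    obtain b c where "b \<noteq> c" "{b'\<in>A. g b' = g a} = {b, c}"
      using fibres[OF a] by (auto simp: card_2_iff)
    with a have "\<exists>b. b \<in> A \<and> g b = g a \<and> b \<noteq> a" by blast
    then show ?thesis unfolding \<sigma>_def by (rule someI_ex)
  qed
  have involutive: "\<sigma> (\<sigma> a) = a" if a: "a \<in> A" for a
  proof -
    obtain b c where "b \<noteq> c" and fibre: "{b'\<in>A. g b' = g a} = {b, c}"
      using fibres[OF a] by (auto simp: card_2_iff)
    have "a \<in> {b, c}" "\<sigma> a \<in> {b, c}" "\<sigma> (\<sigma> a) \<in> {b, c}"
      using other[OF a] other[of "\<sigma> a"] a unfolding fibre[symmetric] by auto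
    with other[OF a] other[of "\<sigma> a"] show ?thesis by auto
  qed
  show thesis
    by (rule that[of \<sigma>]) (use other involutive in blast)
qed

lemma depth_reaches_root:
  assumes "rooted_tree V r p" and "v \<in> V"
  shows "(p ^^ depth p r v) v = r"
  using assms unfolding rooted_tree_def depth_def by (auto intro: LeastI_ex)

lemma depth_eq_0_iff:
  assumes "rooted_tree V r p" and "v \<in> V"
  shows "depth p r v = 0 \<longleftrightarrow> v = r"
  using depth_reaches_root[OF assms] by (auto simp: depth_def intro: Least_eq_0)

lemma depth_parent:
  assumes tree: "rooted_tree V r p" and v: "v \<in> V - {r}"
  shows "depth p r v = Suc (depth p r (p v))"
proof -
  obtain k where k: "depth p r v = Suc k"
    using depth_eq_0_iff[OF tree] v by (cases "depth p r v") auto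
  have pk: "(p ^^ k) (p v) = r"
    using depth_reaches_root[OF tree, of v] v k
    by (simp add: funpow_Suc_right del: funpow.simps)
  have "depth p r (p v) \<le> k"
    unfolding depth_def using pk by (rule Least_le)
  moreover have "(p ^^ Suc (depth p r (p v))) v = r"
    using LeastI[of "\<lambda>n. (p ^^ n) (p v) = r", OF pk] unfolding depth_def
    by (simp add: funpow_Suc_right del: funpow.simps)
  then have "depth p r v \<le> Suc (depth p r (p v))"
    unfolding depth_def by (rule Least_le)
  ultimately show ?thesis using k by simp
qed

locale labelled_rooted_tree =
  fixes V :: "'v set" and r :: 'v and p :: "'v \<Rightarrow> 'v" and lab :: "'v \<Rightarrow> nat"
  assumes tree: "rooted_tree V r p"
begin

lemma finite_V: "finite V" and root_in_V: "r \<in> V"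
  and parent_in_V: "v \<in> V - {r} \<Longrightarrow> p v \<in> V"
  using tree unfolding rooted_tree_def by auto

definition edge_labels :: "'v \<Rightarrow> nat set" where
  "edge_labels v = {lab (p v), lab v}"

definition other_labels :: "nat set" where
  "other_labels = lab ` V - {lab r}"

definition first_depth :: "nat \<Rightarrow> nat" where
  "first_depth x = (LEAST n. \<exists>v\<in>V. lab v = x \<and> depth p r v = n)"

definition first_vertex :: "nat \<Rightarrow> 'v" where
  "first_vertex x = (SOME v. v \<in> V \<and> lab v = x \<and> depth p r v = first_depth x)"

definition first_parent_label :: "nat \<Rightarrow> nat" where
  "first_parent_label x = lab (p (first_vertex x))"

definition first_edge_labels :: "nat \<Rightarrow> nat set" where
  "first_edge_labels x = {first_parent_label x, x}"

lemma first_depth_le: "v \<in> V \<Longrightarrow> first_depth (lab v) \<le> depth p r v"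
  unfolding first_depth_def by (rule Least_le) blast

lemma first_vertex:
  assumes "x \<in> other_labels"
  shows "first_vertex x \<in> V - {r}" and "lab (first_vertex x) = x"
    and "depth p r (first_vertex x) = first_depth x"
proof -
  obtain v where v: "v \<in> V" "lab v = x" using assms unfolding other_labels_def by blast
  have "\<exists>w\<in>V. lab w = x \<and> depth p r w = first_depth x"
    unfolding first_depth_def by (rule LeastI[of _ "depth p r v"]) (use v in blast)
  then have "first_vertex x \<in> V \<and> lab (first_vertex x) = x
      \<and> depth p r (first_vertex x) = first_depth x"
    unfolding first_vertex_def Bex_def by (rule someI_ex)
  with assms show "first_vertex x \<in> V - {r}" "lab (first_vertex x) = x"
      "depth p r (first_vertex x) = first_depth x"
    unfolding other_labels_def by auto
qed

lemma first_depth_parent: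
  assumes "x \<in> other_labels"
  shows "first_depth x = Suc (depth p r (p (first_vertex x)))"
  using depth_parent[OF tree first_vertex(1)[OF assms]] first_vertex(3)[OF assms] by simp

lemma first_depth_first_parent_label_less:
  assumes "x \<in> other_labels"
  shows "first_depth (first_parent_label x) < first_depth x"
  using first_depth_le[OF parent_in_V[OF first_vertex(1)[OF assms]]]
    first_depth_parent[OF assms] unfolding first_parent_label_def by simp

lemma inj_on_first_edge_labels: "inj_on first_edge_labels other_labels"
proof (rule inj_onI)
  fix x y assume "x \<in> other_labels" and "y \<in> other_labels"
    and eq: "first_edge_labels x = first_edge_labels y"
  show "x = y"
  proof (rule ccontr)
    assume "x \<noteq> y"
    with eq have y_eq: "y = first_parent_label x" and x_eq: "x = first_parent_label y"
      unfolding first_edge_labels_def by (metis doubleton_eq_iff)+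
    from first_depth_first_parent_label_less[OF \<open>x \<in> other_labels\<close>, folded y_eq]
      first_depth_first_parent_label_less[OF \<open>y \<in> other_labels\<close>, folded x_eq]
    show False by simp
  qed
qed

lemma first_edge_labels_in_edge_labels:
  "first_edge_labels ` other_labels \<subseteq> edge_labels ` (V - {r})"
proof
  fix c assume "c \<in> first_edge_labels ` other_labels"
  then obtain x where x: "x \<in> other_labels" and c: "c = first_edge_labels x" by blast
  then have "c = edge_labels (first_vertex x)"
    unfolding edge_labels_def first_edge_labels_def first_parent_label_def
    using first_vertex(2)[OF x] by auto
  with first_vertex(1)[OF x] show "c \<in> edge_labels ` (V - {r})" by blast
qed

lemma Delta_eq: "Delta V r lab = real (card (V - {r})) / 2 - real (card other_labels)"
proof -
  have "lab ` V = insert (lab r) other_labels" and "lab r \<notin> other_labels"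
    using root_in_V unfolding other_labels_def by auto
  moreover have "finite other_labels"
    using finite_V unfolding other_labels_def by simp
  ultimately have "card (lab ` V) = Suc (card other_labels)"
    by simp
  then show ?thesis unfolding Delta_def num_edges_def num_labels_def by simp
qed

definition labels_paired :: bool where
  "labels_paired \<longleftrightarrow> (\<forall>v\<in>V - {r}. lab v \<noteq> lab r) \<and>
     (\<forall>x\<in>other_labels. \<exists>v v'. v \<noteq> v' \<and> {w\<in>V. lab w = x} = {v, v'}
        \<and> depth p r v = depth p r v' \<and> lab (p v) = lab (p v'))"

lemma Delta_eq_0_if_labels_paired:
  assumes labels_paired
  shows "Delta V r lab = 0"
proof -
  have "lab ` (V - {r}) = other_labels"
    using assms root_in_V unfolding labels_paired_def other_labels_def by auto
  moreover have "card {v\<in>V - {r}. lab v = x} = 2" if x: "x \<in> other_labels" for x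
  proof -
    have "{v\<in>V - {r}. lab v = x} = {w\<in>V. lab w = x}"
      using x unfolding other_labels_def by auto
    moreover obtain v v' where "v \<noteq> v'" "{w\<in>V. lab w = x} = {v, v'}"
      using assms x unfolding labels_paired_def by blast
    ultimately show ?thesis by simp
  qed
  ultimately have "card (V - {r}) = 2 * card other_labels"
    using card_eq_sum_card_fibres[of "V - {r}" lab] finite_V by simp
  then show ?thesis using Delta_eq by simp
qed

lemma edge_pairing_if_labels_paired:
  assumes labels_paired
  shows "\<exists>\<sigma>. \<forall>v\<in>V - {r}. \<sigma> v \<in> V - {r} \<and> \<sigma> v \<noteq> v \<and> \<sigma> (\<sigma> v) = v
    \<and> depth p r (\<sigma> v) = depth p r v \<and> lab (\<sigma> v) = lab v \<and> lab (p (\<sigma> v)) = lab (p v)"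
proof -
  have pair: "\<exists>a b. a \<noteq> b \<and> {w\<in>V - {r}. lab w = lab v} = {a, b}
      \<and> depth p r a = depth p r b \<and> lab (p a) = lab (p b)" if v: "v \<in> V - {r}" for v
  proof -
    have "lab v \<in> other_labels" and fibre: "{w\<in>V - {r}. lab w = lab v} = {w\<in>V. lab w = lab v}"
      using assms v unfolding labels_paired_def other_labels_def by auto
    with assms show ?thesis unfolding labels_paired_def fibre by blast
  qed
  have "card {w\<in>V - {r}. lab w = lab v} = 2" if "v \<in> V - {r}" for v
    using pair[OF that] by (auto simp: card_2_iff)
  then obtain \<sigma> where \<sigma>: "\<And>v. v \<in> V - {r} \<Longrightarrow>
      \<sigma> v \<in> V - {r} \<and> \<sigma> v \<noteq> v \<and> \<sigma> (\<sigma> v) = v \<and> lab (\<sigma> v) = lab v"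
    using involution_of_fibres_card_2 by blast
  show ?thesis
  proof (intro exI ballI)
    fix v assume v: "v \<in> V - {r}"
    obtain a b where fibre: "{w\<in>V - {r}. lab w = lab v} = {a, b}"
        and same: "depth p r a = depth p r b" "lab (p a) = lab (p b)"
      using pair[OF v] by blast
    have "v \<in> {a, b}" "\<sigma> v \<in> {a, b}"
      using v \<sigma>[OF v] unfolding fibre[symmetric] by auto
    with \<sigma>[OF v] have "v = a \<and> \<sigma> v = b \<or> v = b \<and> \<sigma> v = a"
      by blast
    with same have "depth p r (\<sigma> v) = depth p r v \<and> lab (p (\<sigma> v)) = lab (p v)"
      by auto
    with \<sigma>[OF v] show "\<sigma> v \<in> V - {r} \<and> \<sigma> v \<noteq> v \<and> \<sigma> (\<sigma> v) = v
      \<and> depth p r (\<sigma> v) = depth p r v \<and> lab (\<sigma> v) = lab v \<and> lab (p (\<sigma> v)) = lab (p v)"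
      by blast
  qed
qed

end

locale admissible_tree = labelled_rooted_tree +
  assumes adm: "admissible V r p lab"
begin

lemma grandparent_label_ne:
  assumes "v \<in> V - {r}" and "p v \<noteq> r"
  shows "lab (p (p v)) \<noteq> lab v"
proof -
  have "\<forall>w\<in>V. w \<noteq> r \<and> p w \<noteq> r \<longrightarrow> lab (p (p w)) \<noteq> lab w"
    using adm unfolding admissible_def by (rule conjunct1)
  with assms show ?thesis by blast
qed

lemma edge_labels_repeat:
  assumes "v \<in> V - {r}"
  obtains w where "w \<in> V - {r}" and "w \<noteq> v" and "edge_labels w = edge_labels v"
proof -
  have "\<forall>v\<in>V - {r}. \<exists>w\<in>V - {r}. w \<noteq> v \<and> edge_labels w = edge_labels v"
    using adm unfolding admissible_def edge_labels_def by (rule conjunct2)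
  with assms that show thesis by blast
qed

lemma card_edge_label_fibre_ge_2:
  assumes "c \<in> edge_labels ` (V - {r})"
  shows "2 \<le> card {v\<in>V - {r}. edge_labels v = c}"
proof -
  obtain v where v: "v \<in> V - {r}" "c = edge_labels v" using assms by blast
  obtain w where "w \<in> V - {r}" "w \<noteq> v" "edge_labels w = c"
    unfolding v(2) by (rule edge_labels_repeat[OF v(1)])
  with v have "card {v, w} \<le> card {v\<in>V - {r}. edge_labels v = c}"
    by (intro card_mono) (auto simp: finite_V)
  with \<open>w \<noteq> v\<close> show ?thesis by simp
qed

lemma Delta_eq_0_tight:
  assumes "Delta V r lab = 0"
  shows "edge_labels ` (V - {r}) = first_edge_labels ` other_labels"
    and "c \<in> edge_labels ` (V - {r}) \<Longrightarrow> card {v\<in>V - {r}. edge_labels v = c} = 2"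
proof -
  let ?E = "V - {r}" and ?C = "edge_labels ` (V - {r})"
  have fin: "finite ?E" "finite ?C" using finite_V by auto
  have card_E: "card ?E = 2 * card other_labels"
    using assms Delta_eq by simp
  have "card other_labels \<le> card ?C"
    using card_mono[OF fin(2) first_edge_labels_in_edge_labels]
    by (simp add: card_image[OF inj_on_first_edge_labels])
  moreover have "2 * card ?C \<le> card ?E"
    by (rule card_fibres_ge_2(1)[OF fin(1) card_edge_label_fibre_ge_2])
  ultimately have card_C: "card ?C = card other_labels" and tight: "card ?E = 2 * card ?C"
    using card_E by simp_all
  show "?C = first_edge_labels ` other_labels"
    using card_subset_eq[OF fin(2) first_edge_labels_in_edge_labels] card_C
    by (simp add: card_image[OF inj_on_first_edge_labels])
  show "card {v\<in>?E. edge_labels v = c} = 2" if "c \<in> ?C"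
    by (rule card_fibres_ge_2(2)[OF fin(1) card_edge_label_fibre_ge_2 tight that])
qed

lemma edge_is_first_edge:
  assumes first: "edge_labels ` (V - {r}) \<subseteq> first_edge_labels ` other_labels"
    and v: "v \<in> V - {r}"
  shows "lab v \<in> other_labels \<and> depth p r v = first_depth (lab v)
    \<and> lab (p v) = first_parent_label (lab v)"
  using v
proof (induction "depth p r v" arbitrary: v rule: less_induct)
  case less
  have depth_v: "depth p r v = Suc (depth p r (p v))"
    using depth_parent[OF tree less.prems] .
  have IH: "lab (p v) \<in> other_labels \<and> depth p r (p v) = first_depth (lab (p v))
      \<and> lab (p (p v)) = first_parent_label (lab (p v))" if "p v \<noteq> r"
    using less.hyps[of "p v"] depth_v parent_in_V[OF less.prems] that by simp
  obtain x where x: "x \<in> other_labels" and "edge_labels v = first_edge_labels x"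
    using first less.prems by blast
  then consider (forward) "lab v = x" "lab (p v) = first_parent_label x"
    | (backward) "lab v = first_parent_label x" "lab (p v) = x"
    unfolding edge_labels_def first_edge_labels_def by (auto simp: doubleton_eq_iff)
  then show ?case
  proof cases
    case forward
    have "depth p r v \<le> first_depth x"
    proof (cases "p v = r")
      case True
      have "first_depth x \<noteq> 0"
        using first_vertex[OF x] depth_eq_0_iff[OF tree] by force
      with True depth_v depth_eq_0_iff[OF tree root_in_V] show ?thesis by simp
    next
      case False
      with IH forward have "depth p r (p v) = first_depth (first_parent_label x)" by simp
      with depth_v first_depth_first_parent_label_less[OF x] show ?thesis by simp
    qed
    with first_depth_le[of v] less.prems forward x show ?thesis by simp
  next
    case backward
    with x have "p v \<noteq> r" unfolding other_labels_def by auto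
    with IH backward have "lab (p (p v)) = lab v" by simp
    with grandparent_label_ne[OF less.prems \<open>p v \<noteq> r\<close>] show ?thesis by blast
  qed
qed

lemma label_fibre_eq_edge_label_fibre:
  assumes first: "edge_labels ` (V - {r}) \<subseteq> first_edge_labels ` other_labels"
    and x: "x \<in> other_labels"
  shows "{w\<in>V. lab w = x} = {v\<in>V - {r}. edge_labels v = first_edge_labels x}"
proof (intro equalityI subsetI)
  fix w assume "w \<in> {w\<in>V. lab w = x}"
  with x have "w \<in> V - {r}" and "lab w = x" unfolding other_labels_def by auto
  with edge_is_first_edge[OF first] show "w \<in> {v\<in>V - {r}. edge_labels v = first_edge_labels x}"
    unfolding edge_labels_def first_edge_labels_def by auto
next
  fix v assume "v \<in> {v\<in>V - {r}. edge_labels v = first_edge_labels x}"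
  then have v: "v \<in> V - {r}" and "edge_labels v = first_edge_labels x" by auto
  then consider "lab v = x" | "lab v = first_parent_label x" "lab (p v) = x"
    unfolding edge_labels_def first_edge_labels_def by (auto simp: doubleton_eq_iff)
  then show "v \<in> {w\<in>V. lab w = x}"
  proof cases
    case 2
    have "lab v \<in> other_labels" and "lab (p v) = first_parent_label (lab v)"
      using edge_is_first_edge[OF first v] by auto
    with 2 have "first_parent_label x \<in> other_labels"
      and "first_parent_label (first_parent_label x) = x"
      by simp_all
    from first_depth_first_parent_label_less[OF this(1), unfolded this(2)]
      first_depth_first_parent_label_less[OF x]
    show ?thesis by simp
  qed (use v in simp)
qed

lemma Delta_eq_0_imp_labels_paired:
  assumes Delta: "Delta V r lab = 0"
  shows labels_paired
proof -
  note first = equalityD1[OF Delta_eq_0_tight(1)[OF Delta]]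
  have "\<exists>v v'. v \<noteq> v' \<and> {w\<in>V. lab w = x} = {v, v'}
      \<and> depth p r v = depth p r v' \<and> lab (p v) = lab (p v')" if x: "x \<in> other_labels" for x
  proof -
    have "first_edge_labels x \<in> edge_labels ` (V - {r})"
      using first_edge_labels_in_edge_labels x by blast
    then have "card {w\<in>V. lab w = x} = 2"
      using Delta_eq_0_tight(2)[OF Delta] label_fibre_eq_edge_label_fibre[OF first x] by simp
    then obtain v v' where vv': "v \<noteq> v'" "{w\<in>V. lab w = x} = {v, v'}"
      unfolding card_2_iff by blast
    then have "v \<in> V - {r}" "lab v = x" "v' \<in> V - {r}" "lab v' = x"
      using x unfolding other_labels_def by auto
    then have "depth p r v = depth p r v'" "lab (p v) = lab (p v')"
      using edge_is_first_edge[OF first] by auto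
    with vv' show ?thesis by blast
  qed
  moreover have "\<forall>v\<in>V - {r}. lab v \<noteq> lab r"
    using edge_is_first_edge[OF first] unfolding other_labels_def by blast
  ultimately show ?thesis unfolding labels_paired_def by blast
qed

end

theorem lemma2p14:
  fixes V :: "'v set" and r :: 'v and p :: "'v \<Rightarrow> 'v" and lab :: "'v \<Rightarrow> nat" and N :: nat
  assumes tree: "rooted_tree V r p"
    and labels: "lab ` V \<subseteq> {1..N}"
    and adm: "admissible V r p lab"
  shows "(Delta V r lab = 0 \<longleftrightarrow>
            (\<forall>v\<in>V - {r}. lab v \<noteq> lab r) \<and>
            (\<forall>x\<in>lab ` V - {lab r}. \<exists>v v'. v \<noteq> v' \<and> {w\<in>V. lab w = x} = {v, v'}
                 \<and> depth p r v = depth p r v' \<and> lab (p v) = lab (p v')))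
       \<and> (Delta V r lab = 0 \<longrightarrow>
            (\<exists>\<sigma>. \<forall>v\<in>V - {r}. \<sigma> v \<in> V - {r} \<and> \<sigma> v \<noteq> v \<and> \<sigma> (\<sigma> v) = v
                 \<and> depth p r (\<sigma> v) = depth p r v
                 \<and> lab (\<sigma> v) = lab v \<and> lab (p (\<sigma> v)) = lab (p v)))"
proof -
  interpret admissible_tree V r p lab
    by unfold_locales (rule tree, rule adm)
  have "Delta V r lab = 0 \<longleftrightarrow> labels_paired"
    using Delta_eq_0_imp_labels_paired Delta_eq_0_if_labels_paired by blast
  with edge_pairing_if_labels_paired show ?thesis
    unfolding other_labels_def[symmetric] labels_paired_def[symmetric] by blast
qed

end
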